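(* A topological space $X$ is $\alpha_1$ if and only if, for each $x\in X$, player ONE does not have a winning strategy in the game $\alpha_1^{\mathrm{game}}(X,x)$.
   Context: Convention: a "sequence" is a countably infinite set; a countably infinite set $A$ converges to $x$ if $x\notin A$ and every neighborhood of $x$ contains all but finitely many elements of $A$. $X$ is $\alpha_1$ if for each $x\in X$ and all pairwise disjoint sequences $S_1,S_2,\dots\subseteq X$ each converging to $x$, there is a sequence $S\subseteq\bigcup_nS_n$ converging to $x$ such that $S_n\setminus S$ is finite for all $n$. The game $\alpha_1^{\mathrm{game}}(X,x)$ is played by ONE and TWO in innings $n\in\mathbb N$: in the $n$-th inning ONE chooses a sequence $S_n\subseteq X$ converging to $x$, and TWO responds with a cofinite subset $T_n\subseteq S_n$. TWO wins if $\bigcup_nT_n$ converges to $x$; otherwise ONE wins. *)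

theory Defs
  imports "HOL-Analysis.Analysis"
begin

text \<open>A "sequence" is a countably infinite set. A sequence A converges to x in X
  if x is not in A and every open neighbourhood of x contains all but finitely many
  elements of A.\<close>
definition seq_converges :: "'a topology \<Rightarrow> 'a set \<Rightarrow> 'a \<Rightarrow> bool" where
  "seq_converges X A x \<longleftrightarrow>
     A \<subseteq> topspace X \<and> countable A \<and> infinite A \<and> x \<notin> A \<and>
     (\<forall>U. openin X U \<and> x \<in> U \<longrightarrow> finite (A - U))"

definition alpha1 :: "'a topology \<Rightarrow> bool" where
  "alpha1 X \<longleftrightarrow>
     (\<forall>x \<in> topspace X. \<forall>S :: nat \<Rightarrow> 'a set.
        (\<forall>n. seq_converges X (S n) x) \<and> disjoint_family S \<longrightarrow>
        (\<exists>T. T \<subseteq> (\<Union>n. S n) \<and> seq_converges X T x \<and> (\<forall>n. finite (S n - T))))"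

text \<open>A strategy for ONE in the game alpha1-game(X,x) chooses its move in inning n
  from the list of TWO's previous responses [T_0,...,T_(n-1)].
  A play where TWO responds legally (T_n a cofinite subset of ONE's move) is given by
  the sequence T of TWO's moves.\<close>
definition ONE_winning_strategy :: "'a topology \<Rightarrow> 'a \<Rightarrow> ('a set list \<Rightarrow> 'a set) \<Rightarrow> bool" where
  "ONE_winning_strategy X x \<sigma> \<longleftrightarrow>
     (\<forall>T :: nat \<Rightarrow> 'a set.
        (\<forall>n. T n \<subseteq> \<sigma> (map T [0..<n]) \<and> finite (\<sigma> (map T [0..<n]) - T n)) \<longrightarrow>
        (\<forall>n. seq_converges X (\<sigma> (map T [0..<n])) x) \<and>
        \<not> seq_converges X (\<Union>n. T n) x)"

end

theory Submission
  imports Defs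
begin

text \<open>If \<open>X\<close> is \<open>\<alpha>\<^sub>1\<close>, every countable family of sequences converging to \<open>x\<close>, disjoint or not,
  is almost contained in one convergent sequence \<open>B\<close>: disjointify the family and treat the
  finitely or infinitely many infinite pieces separately. Positions of the game reached by
  legal play against a fixed strategy of ONE form a countable tree, because each reply of TWO
  is determined by the finite set it removes; so ONE's moves form such a family, and TWO
  defeats the strategy by always answering \<open>\<sigma> q \<inter> B\<close>, whose union is an infinite subset of \<open>B\<close>.
  Conversely, disjoint sequences witnessing the failure of \<open>\<alpha>\<^sub>1\<close> at \<open>x\<close> give ONE the winning
  strategy of playing the \<open>n\<close>-th of them in inning \<open>n\<close>.\<close>

lemma seq_converges_subset:
  assumes "seq_converges X B x" "A \<subseteq> B" "infinite A"
  shows "seq_converges X A x"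
  using assms unfolding seq_converges_def
  by (meson countable_subset finite_subset Diff_mono order_refl subset_iff)

lemma seq_converges_Un:
  assumes "seq_converges X A x" "seq_converges X B x"
  shows "seq_converges X (A \<union> B) x"
  using assms unfolding seq_converges_def by (auto simp: Un_Diff)

lemma seq_converges_UN_atMost:
  fixes N :: nat
  assumes "\<And>m. m \<le> N \<Longrightarrow> seq_converges X (S m) x"
  shows "seq_converges X (\<Union>m\<le>N. S m) x"
  using assms
proof (induction N)
  case 0
  then show ?case by simp
next
  case (Suc N)
  have "(\<Union>m\<le>Suc N. S m) = (\<Union>m\<le>N. S m) \<union> S (Suc N)"
    by (auto simp: atMost_Suc)
  then show ?case
    using Suc seq_converges_Un by (metis le_Suc_eq)
qed

lemma alpha1_disjoint_family_on:
  fixes D :: "nat \<Rightarrow> 'a set"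
  assumes "alpha1 X" "x \<in> topspace X" "infinite I" "disjoint_family_on D I"
    and conv: "\<And>m. m \<in> I \<Longrightarrow> seq_converges X (D m) x"
  shows "\<exists>T. seq_converges X T x \<and> (\<forall>m\<in>I. finite (D m - T))"
proof -
  define E where "E k = D (enumerate I k)" for k
  have "inj (enumerate I)"
    using \<open>infinite I\<close> by (rule inj_enumerate)
  then have "disjoint_family E"
    using \<open>disjoint_family_on D I\<close> enumerate_in_set[OF \<open>infinite I\<close>]
    unfolding disjoint_family_on_def E_def inj_def by blast
  moreover have "seq_converges X (E k) x" for k
    unfolding E_def using conv enumerate_in_set[OF \<open>infinite I\<close>] by blast
  ultimately obtain T where "seq_converges X T x" "\<forall>k. finite (E k - T)"
    using assms(1,2) unfolding alpha1_def by blast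
  moreover have "\<exists>k. enumerate I k = m" if "m \<in> I" for m
    using enumerate_Ex[OF \<open>infinite I\<close> that] .
  ultimately show ?thesis
    unfolding E_def by metis
qed

lemma alpha1_sequence:
  fixes S :: "nat \<Rightarrow> 'a set"
  assumes "alpha1 X" "x \<in> topspace X" and conv: "\<And>n. seq_converges X (S n) x"
  shows "\<exists>B. seq_converges X B x \<and> (\<forall>n. finite (S n - B))"
proof -
  define D where "D = disjointed S"
  have D_subset: "D m \<subseteq> S m" for m
    unfolding D_def by (rule disjointed_subset)
  have finite_S_diff: "finite (S n - B)" if "\<And>m. finite (D m - B)" for B n
  proof -
    have "S n \<subseteq> (\<Union>m\<in>{0..<Suc n}. D m)"
      unfolding D_def finite_UN_disjointed_eq by auto
    then have "S n - B \<subseteq> (\<Union>m\<in>{0..<Suc n}. D m - B)"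
      by blast
    then show ?thesis
      using that by (meson finite_UN_I finite_atLeastLessThan finite_subset)
  qed
  define I where "I = {m. infinite (D m)}"
  show ?thesis
  proof (cases "finite I")
    case True
    then obtain N where N: "\<forall>m\<in>I. m < N"
      by (metis finite_nat_bounded lessThan_iff subset_eq)
    define B where "B = (\<Union>m\<le>N. S m)"
    have finite_D: "finite (D m - B)" for m
    proof (cases "m \<le> N")
      case True
      then have "D m - B = {}"
        using D_subset unfolding B_def by blast
      then show ?thesis
        by (metis finite.emptyI)
    next
      case False
      then have "m \<notin> I"
        using N by auto
      then show ?thesis
        unfolding I_def by simp
    qed
    have "seq_converges X B x"
      unfolding B_def by (rule seq_converges_UN_atMost) (rule conv)
    moreover have "\<forall>n. finite (S n - B)"
      using finite_D by (intro allI finite_S_diff)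
    ultimately show ?thesis
      by blast
  next
    case False
    have "disjoint_family_on D I"
      unfolding D_def by (rule disjoint_family_on_mono[OF subset_UNIV disjoint_family_disjointed])
    moreover have "seq_converges X (D m) x" if "m \<in> I" for m
      using that unfolding I_def by (intro seq_converges_subset[OF conv D_subset]) simp
    ultimately obtain T where T: "seq_converges X T x" "\<forall>m\<in>I. finite (D m - T)"
      using alpha1_disjoint_family_on[OF assms(1,2) False] by blast
    have "finite (D m - T)" for m
      using T(2) unfolding I_def by (cases "m \<in> I") auto
    then have "\<forall>n. finite (S n - T)"
      by (intro allI finite_S_diff)
    with T(1) show ?thesis
      by blast
  qed
qed

lemma alpha1_countable_family:
  assumes "alpha1 X" "x \<in> topspace X" "countable F" "F \<noteq> {}"
    and "\<And>A. A \<in> F \<Longrightarrow> seq_converges X A x"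
  shows "\<exists>B. seq_converges X B x \<and> (\<forall>A\<in>F. finite (A - B))"
proof -
  have F: "range (from_nat_into F) = F"
    using assms(3,4) by simp
  then have "seq_converges X (from_nat_into F n) x" for n
    using assms(5) by blast
  then obtain B where B: "seq_converges X B x" "\<forall>n. finite (from_nat_into F n - B)"
    using alpha1_sequence[OF assms(1,2)] by blast
  have "finite (A - B)" if "A \<in> F" for A
  proof -
    obtain n where "A = from_nat_into F n"
      using F \<open>A \<in> F\<close> by blast
    then show ?thesis
      using B(2) by simp
  qed
  then show ?thesis
    using B(1) by blast
qed

definition legal_position :: "('a set list \<Rightarrow> 'a set) \<Rightarrow> 'a set list \<Rightarrow> bool" where
  "legal_position \<sigma> q \<longleftrightarrow>
     (\<forall>i<length q. q ! i \<subseteq> \<sigma> (take i q) \<and> finite (\<sigma> (take i q) - q ! i))"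

lemma legal_position_Nil [simp]: "legal_position \<sigma> []"
  unfolding legal_position_def by simp

lemma legal_position_snoc:
  "legal_position \<sigma> (q @ [t]) \<longleftrightarrow> legal_position \<sigma> q \<and> t \<subseteq> \<sigma> q \<and> finite (\<sigma> q - t)"
  unfolding legal_position_def by (auto simp: nth_append less_Suc_eq)

fun play :: "('a set list \<Rightarrow> 'a set) \<Rightarrow> nat \<Rightarrow> 'a set list" where
  "play \<tau> 0 = []"
| "play \<tau> (Suc n) = play \<tau> n @ [\<tau> (play \<tau> n)]"

lemma map_play: "map (\<lambda>k. \<tau> (play \<tau> k)) [0..<n] = play \<tau> n"
  by (induction n) auto

lemma legal_position_play:
  assumes "\<And>q. legal_position \<sigma> q \<Longrightarrow> \<tau> q \<subseteq> \<sigma> q \<and> finite (\<sigma> q - \<tau> q)"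
  shows "legal_position \<sigma> (play \<tau> n)"
  by (induction n) (auto simp: legal_position_snoc assms)

lemma ONE_winning_strategy_play:
  assumes "ONE_winning_strategy X x \<sigma>"
    and legal: "\<And>q. legal_position \<sigma> q \<Longrightarrow> \<tau> q \<subseteq> \<sigma> q \<and> finite (\<sigma> q - \<tau> q)"
  shows "seq_converges X (\<sigma> (play \<tau> n)) x" "\<not> seq_converges X (\<Union>n. \<tau> (play \<tau> n)) x"
proof -
  let ?T = "\<lambda>k. \<tau> (play \<tau> k)"
  have "legal_position \<sigma> (play \<tau> n)" for n
    using legal by (rule legal_position_play)
  then have "\<forall>n. ?T n \<subseteq> \<sigma> (map ?T [0..<n]) \<and> finite (\<sigma> (map ?T [0..<n]) - ?T n)"
    using legal by (simp add: map_play)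
  then have "(\<forall>n. seq_converges X (\<sigma> (map ?T [0..<n])) x) \<and> \<not> seq_converges X (\<Union>n. ?T n) x"
    using assms(1) unfolding ONE_winning_strategy_def by (elim allE[of _ ?T] mp)
  then show "seq_converges X (\<sigma> (play \<tau> n)) x" "\<not> seq_converges X (\<Union>n. \<tau> (play \<tau> n)) x"
    by (simp_all add: map_play)
qed

lemma ONE_winning_strategy_converges:
  assumes "ONE_winning_strategy X x \<sigma>" and p: "legal_position \<sigma> p"
  shows "seq_converges X (\<sigma> p) x"
proof -
  \<comment> \<open>TWO replays \<open>p\<close> and then keeps ONE's moves unchanged.\<close>
  define \<tau> where "\<tau> q = (if length q < length p \<and> q = take (length q) p then p ! length q else \<sigma> q)"
    for q
  have "\<tau> q \<subseteq> \<sigma> q \<and> finite (\<sigma> q - \<tau> q)" for q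
  proof (cases "length q < length p \<and> q = take (length q) p")
    case True
    then have "\<tau> q = p ! length q"
      unfolding \<tau>_def by simp
    moreover have "p ! length q \<subseteq> \<sigma> (take (length q) p) \<and> finite (\<sigma> (take (length q) p) - p ! length q)"
      using p True unfolding legal_position_def by blast
    ultimately show ?thesis
      using True by metis
  qed (auto simp: \<tau>_def)
  moreover have "play \<tau> k = take k p" if "k \<le> length p" for k
    using that
  proof (induction k)
    case (Suc k)
    then have "\<tau> (take k p) = p ! k"
      unfolding \<tau>_def by auto
    with Suc show ?case
      by (simp add: take_Suc_conv_app_nth)
  qed simp
  ultimately show ?thesis
    using ONE_winning_strategy_play(1)[OF assms(1), of \<tau> "length p"] by simp
qed

lemma countable_legal_positions:
  assumes "\<And>q. legal_position \<sigma> q \<Longrightarrow> countable (\<sigma> q)"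
  shows "countable {q. legal_position \<sigma> q}"
proof -
  define P where "P n = {q. legal_position \<sigma> q \<and> length q = n}" for n
  have "countable (P n)" for n
  proof (induction n)
    case 0
    have "P 0 = {[]}"
      unfolding P_def by auto
    then show ?case by simp
  next
    case (Suc n)
    let ?extend = "\<lambda>(q, F). q @ [\<sigma> q - F]"
    have "P (Suc n) \<subseteq> ?extend ` (SIGMA q:P n. {F. finite F \<and> F \<subseteq> \<sigma> q})"
    proof
      fix r assume "r \<in> P (Suc n)"
      then obtain q t where r: "r = q @ [t]" "legal_position \<sigma> (q @ [t])" "length q = n"
        unfolding P_def by (metis (mono_tags, lifting) length_Suc_conv_rev mem_Collect_eq)
      then have "t = \<sigma> q - (\<sigma> q - t)" "finite (\<sigma> q - t)" "legal_position \<sigma> q"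
        by (auto simp: legal_position_snoc)
      then show "r \<in> ?extend ` (SIGMA q:P n. {F. finite F \<and> F \<subseteq> \<sigma> q})"
        using r unfolding P_def by (intro image_eqI[of _ _ "(q, \<sigma> q - t)"]) auto
    qed
    moreover have "countable (SIGMA q:P n. {F. finite F \<and> F \<subseteq> \<sigma> q})"
      using Suc.IH assms
      by (intro countable_SIGMA countable_Collect_finite_subset) (auto simp: P_def)
    ultimately show ?case
      by (meson countable_image countable_subset)
  qed
  moreover have "{q. legal_position \<sigma> q} = (\<Union>n. P n)"
    unfolding P_def by auto
  ultimately show ?thesis by auto
qed

lemma alpha1_imp_no_ONE_winning_strategy:
  assumes "alpha1 X" "x \<in> topspace X"
  shows "\<not> ONE_winning_strategy X x \<sigma>"
proof
  assume win: "ONE_winning_strategy X x \<sigma>"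
  let ?F = "\<sigma> ` {q. legal_position \<sigma> q}"
  have conv: "seq_converges X (\<sigma> q) x" if "legal_position \<sigma> q" for q
    using ONE_winning_strategy_converges[OF win that] .
  have "countable ?F"
    using countable_legal_positions[of \<sigma>] conv unfolding seq_converges_def by blast
  moreover have "?F \<noteq> {}"
    using legal_position_Nil by blast
  ultimately obtain B where B: "seq_converges X B x" "\<forall>A\<in>?F. finite (A - B)"
    using alpha1_countable_family[OF assms] conv by blast
  define \<tau> where "\<tau> q = \<sigma> q \<inter> B" for q
  have "\<tau> q \<subseteq> \<sigma> q \<and> finite (\<sigma> q - \<tau> q)" if "legal_position \<sigma> q" for q
    using B(2) that unfolding \<tau>_def by (auto simp: Diff_Int)
  note play = ONE_winning_strategy_play[OF win this]
  have "infinite (\<sigma> [])" "finite (\<sigma> [] - B)"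
    using conv[of "[]"] B(2) unfolding seq_converges_def by auto
  moreover have "\<sigma> [] = \<tau> [] \<union> (\<sigma> [] - B)"
    unfolding \<tau>_def by blast
  ultimately have "infinite (\<tau> [])"
    by (metis finite_Un)
  moreover have "\<tau> [] \<subseteq> (\<Union>n. \<tau> (play \<tau> n))"
    using UN_upper[of 0 UNIV "\<lambda>n. \<tau> (play \<tau> n)"] by simp
  ultimately have "infinite (\<Union>n. \<tau> (play \<tau> n))"
    using finite_subset by blast
  moreover have "(\<Union>n. \<tau> (play \<tau> n)) \<subseteq> B"
    unfolding \<tau>_def by blast
  ultimately have "seq_converges X (\<Union>n. \<tau> (play \<tau> n)) x"
    by (intro seq_converges_subset[OF B(1)])
  with play(2) show False ..
qed

lemma no_ONE_winning_strategy_imp_alpha1: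
  assumes "\<And>x \<sigma>. x \<in> topspace X \<Longrightarrow> \<not> ONE_winning_strategy X x \<sigma>"
  shows "alpha1 X"
  unfolding alpha1_def
proof (intro ballI allI impI)
  fix x and S :: "nat \<Rightarrow> 'a set"
  assume x: "x \<in> topspace X" and S: "(\<forall>n. seq_converges X (S n) x) \<and> disjoint_family S"
  show "\<exists>T. T \<subseteq> (\<Union>n. S n) \<and> seq_converges X T x \<and> (\<forall>n. finite (S n - T))"
  proof (rule ccontr)
    assume none: "\<not> ?thesis"
    have "ONE_winning_strategy X x (\<lambda>q. S (length q))"
      unfolding ONE_winning_strategy_def
    proof (intro allI impI conjI)
      fix T :: "nat \<Rightarrow> 'a set"
      assume "\<forall>n. T n \<subseteq> S (length (map T [0..<n])) \<and> finite (S (length (map T [0..<n])) - T n)"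
      then have sub: "T n \<subseteq> S n" and fin: "finite (S n - T n)" for n
        by simp_all
      have "finite (S n - (\<Union>n. T n))" for n
        by (rule finite_subset[OF _ fin[of n]]) blast
      moreover have "(\<Union>n. T n) \<subseteq> (\<Union>n. S n)"
        using sub by blast
      ultimately show "\<not> seq_converges X (\<Union>n. T n) x"
        using none by blast
    qed (use S in simp)
    then show False
      using assms x by blast
  qed
qed

theorem lemma2p13:
  fixes X :: "'a topology"
  shows "alpha1 X \<longleftrightarrow> (\<forall>x \<in> topspace X. \<not> (\<exists>\<sigma>. ONE_winning_strategy X x \<sigma>))"
proof
  assume "alpha1 X"
  then show "\<forall>x \<in> topspace X. \<not> (\<exists>\<sigma>. ONE_winning_strategy X x \<sigma>)"
    by (simp add: alpha1_imp_no_ONE_winning_strategy)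
next
  assume "\<forall>x \<in> topspace X. \<not> (\<exists>\<sigma>. ONE_winning_strategy X x \<sigma>)"
  then show "alpha1 X"
    by (intro no_ONE_winning_strategy_imp_alpha1) blast
qed

end
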